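(* Let $X$ be a geodesic metric space and let $\ell_1,\ell_2$ be two $N$-Morse geodesics in $X$ with $\ell_1(0)=\ell_2(0)=e$. Suppose there exists some $t_0$ such that $d(\ell_1(t),\ell_2(t))>4N(3,0)$ for all $t\ge t_0$, and fix such a $t_0$ with $d(\ell_1(t_0),\ell_2(t_0))\le 6N(3,0)$. Let $t_1,t_2\ge t_0$ (in the domains of $\ell_1,\ell_2$ respectively), and set $x_i=\ell_i(t_0)$, $y_i=\ell_i(t_i)$. Let $P$ be the path obtained by following $\ell_1$ from $y_1$ to $x_1$, then any geodesic from $x_1$ to $x_2$, then $\ell_2$ from $x_2$ to $y_2$. Then $P$ is a $(1,12N(3,0))$-quasi-geodesic. In particular \[d(y_1,y_2)\ge d(y_1,x_1)+d(x_1,x_2)+d(x_2,y_2)-12N(3,0).\]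
   Context: A Morse gauge is a function $N$ assigning to each $(K,C)$ ($K\ge1,C\ge0$) a number $N(K,C)\ge0$; a geodesic $\gamma$ is $N$-Morse if every $(K,C)$-quasi-geodesic with endpoints on $\gamma$ lies in the $N(K,C)$-neighbourhood of $\gamma$. A $(K,C)$-quasi-geodesic is a path $f$ with $K^{-1}|s-t|-C\le d(f(s),f(t))\le K|s-t|+C$. *)

theory Defs
  imports "HOL-Analysis.Analysis"
begin

definition geodesic_on :: "real set \<Rightarrow> (real \<Rightarrow> 'a::metric_space) \<Rightarrow> bool" where
  "geodesic_on D g \<longleftrightarrow> is_interval D \<and> D \<noteq> {} \<and>
     (\<forall>s\<in>D. \<forall>t\<in>D. dist (g s) (g t) = \<bar>s - t\<bar>)"

definition geodesic_space :: "'a::metric_space itself \<Rightarrow> bool" where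
  "geodesic_space _ \<longleftrightarrow> (\<forall>x y::'a. \<exists>g. geodesic_on {0..dist x y} g \<and> g 0 = x \<and> g (dist x y) = y)"

definition quasi_geodesic :: "real \<Rightarrow> real \<Rightarrow> (real \<Rightarrow> 'a::metric_space) \<Rightarrow> real \<Rightarrow> real \<Rightarrow> bool" where
  "quasi_geodesic K C f a b \<longleftrightarrow> a \<le> b \<and> continuous_on {a..b} f \<and>
     (\<forall>s\<in>{a..b}. \<forall>t\<in>{a..b}.
        \<bar>s - t\<bar> / K - C \<le> dist (f s) (f t) \<and> dist (f s) (f t) \<le> K * \<bar>s - t\<bar> + C)"

definition morse_gauge :: "(real \<Rightarrow> real \<Rightarrow> real) \<Rightarrow> bool" where
  "morse_gauge N \<longleftrightarrow> (\<forall>K C. K \<ge> 1 \<longrightarrow> C \<ge> 0 \<longrightarrow> N K C \<ge> 0)"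

definition N_Morse :: "(real \<Rightarrow> real \<Rightarrow> real) \<Rightarrow> real set \<Rightarrow> (real \<Rightarrow> 'a::metric_space) \<Rightarrow> bool" where
  "N_Morse N D \<gamma> \<longleftrightarrow> geodesic_on D \<gamma> \<and>
     (\<forall>K C f a b. K \<ge> 1 \<longrightarrow> C \<ge> 0 \<longrightarrow> quasi_geodesic K C f a b \<longrightarrow>
        f a \<in> \<gamma> ` D \<longrightarrow> f b \<in> \<gamma> ` D \<longrightarrow>
        (\<forall>s\<in>{a..b}. \<exists>u\<in>D. dist (f s) (\<gamma> u) \<le> N K C))"

definition concat_path :: "(real \<Rightarrow> 'a) \<Rightarrow> (real \<Rightarrow> 'a) \<Rightarrow> (real \<Rightarrow> 'a) \<Rightarrow> real \<Rightarrow> real \<Rightarrow> real \<Rightarrow> real \<Rightarrow> real \<Rightarrow> 'a" where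
  "concat_path l1 g l2 t0 t1 t2 d s =
     (if s \<le> t1 - t0 then l1 (t1 - s)
      else if s \<le> (t1 - t0) + d then g (s - (t1 - t0))
      else l2 (t0 + (s - (t1 - t0) - d)))"

end

theory Submission
  imports Defs
begin

text \<open>The path is glued from geodesic pieces, hence 1-Lipschitz, and for a 1-Lipschitz path the
  bound \<open>d(P s, P t) \<ge> |s - t| - C\<close> follows for all parameters from the bound at the two endpoints,
  by the triangle inequality. So it suffices to show \<open>d(y\<^sub>1, y\<^sub>2) \<ge> (t\<^sub>1 - t\<^sub>0) + (t\<^sub>2 - t\<^sub>0) - 4N(3,0)\<close>.
  This comes from projecting \<open>e\<close> to a geodesic from \<open>y\<^sub>1\<close> to \<open>y\<^sub>2\<close>: by the Morse property the
  projection is \<open>N(3,0)\<close>-close to both geodesics, at parameters before the divergence time \<open>t\<^sub>0\<close>.\<close>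

lemma geodesic_onD:
  "geodesic_on D \<gamma> \<Longrightarrow> s \<in> D \<Longrightarrow> t \<in> D \<Longrightarrow> dist (\<gamma> s) (\<gamma> t) = \<bar>s - t\<bar>"
  unfolding geodesic_on_def by blast

lemma geodesic_on_between:
  "geodesic_on D \<gamma> \<Longrightarrow> a \<in> D \<Longrightarrow> b \<in> D \<Longrightarrow> a \<le> x \<Longrightarrow> x \<le> b \<Longrightarrow> x \<in> D"
  unfolding geodesic_on_def is_interval_1 by blast

lemma geodesic_on_lipschitz_reparam:
  assumes "geodesic_on D \<gamma>" and "\<And>s. s \<in> S \<Longrightarrow> \<phi> s \<in> D"
    and "\<And>s t. s \<in> S \<Longrightarrow> t \<in> S \<Longrightarrow> \<bar>\<phi> s - \<phi> t\<bar> = \<bar>s - t\<bar>"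
  shows "1-lipschitz_on S (\<lambda>s. \<gamma> (\<phi> s))"
  by (rule lipschitz_onI) (use assms in \<open>simp_all add: geodesic_onD dist_real_def\<close>)

lemma geodesic_on_reflect:
  assumes "geodesic_on {0..L} \<gamma>"
  shows "geodesic_on {0..L} (\<lambda>v. \<gamma> (L - v))"
  using assms unfolding geodesic_on_def by (auto simp: is_interval_1)

lemma quasi_geodesic_if_lipschitz:
  fixes f :: "real \<Rightarrow> 'a::metric_space"
  assumes "1-lipschitz_on {a..b} f" and "a \<le> b" and "K \<ge> 1" and "C \<ge> 0"
    and lower: "\<And>s t. a \<le> s \<Longrightarrow> s \<le> t \<Longrightarrow> t \<le> b \<Longrightarrow> (t - s) / K - C \<le> dist (f s) (f t)"
  shows "quasi_geodesic K C f a b"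
proof -
  have "\<bar>s - t\<bar> \<le> K * \<bar>s - t\<bar> + C" for s t
    using \<open>K \<ge> 1\<close> \<open>C \<ge> 0\<close> mult_right_mono[of 1 K "\<bar>s - t\<bar>"] by simp
  moreover have "\<bar>s - t\<bar> / K - C \<le> dist (f s) (f t)" if "s \<in> {a..b}" "t \<in> {a..b}" for s t
    using lower[of s t] lower[of t s] that by (cases "s \<le> t") (auto simp: dist_commute)
  ultimately show ?thesis
    using assms(1,2) lipschitz_on_continuous_on lipschitz_onD[OF assms(1)]
    unfolding quasi_geodesic_def dist_real_def by (smt (verit))
qed

lemma quasi_geodesic_if_lipschitz_endpoints:
  fixes f :: "real \<Rightarrow> 'a::metric_space"
  assumes lip: "1-lipschitz_on {a..b} f" and "a \<le> b"
    and ends: "b - a - C \<le> dist (f a) (f b)"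
  shows "quasi_geodesic 1 C f a b"
proof (rule quasi_geodesic_if_lipschitz[OF lip \<open>a \<le> b\<close>])
  have "dist (f a) (f b) \<le> b - a"
    using lipschitz_onD[OF lip, of a b] \<open>a \<le> b\<close> by (simp add: dist_real_def)
  then show "C \<ge> 0" using ends by simp
  fix s t assume st: "a \<le> s" "s \<le> t" "t \<le> b"
  have "dist (f a) (f s) \<le> s - a" "dist (f t) (f b) \<le> b - t"
    using lipschitz_onD[OF lip, of a s] lipschitz_onD[OF lip, of t b] st
    by (simp_all add: dist_real_def)
  moreover have "dist (f a) (f b) \<le> dist (f a) (f s) + dist (f s) (f t) + dist (f t) (f b)"
    by (metis add_mono_thms_linordered_semiring(3) dist_triangle order_trans)
  ultimately show "(t - s) / 1 - C \<le> dist (f s) (f t)" using ends by simp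
qed (simp)

text \<open>If \<open>\<gamma> v\<^sub>0\<close> is a closest point of the segment \<open>\<gamma>\<close> to \<open>x = \<tau> 0\<close>, then going from \<open>x\<close> to
  \<open>\<gamma> v\<^sub>0\<close> and on along \<open>\<gamma>\<close> is a (3,0)-quasi-geodesic: for \<open>s \<le> h \<le> t\<close> the distance \<open>\<delta>\<close>
  between \<open>\<tau> s\<close> and \<open>\<gamma> w\<close> satisfies \<open>h - s \<le> \<delta>\<close> (closest point) and \<open>t - h \<le> (h - s) + \<delta>\<close>.\<close>

lemma closest_point_path_quasi_geodesic:
  fixes \<tau> \<gamma> :: "real \<Rightarrow> 'a::metric_space"
  assumes tau: "geodesic_on {0..h} \<tau>" and gam: "geodesic_on {0..L} \<gamma>"
    and v0: "0 \<le> v0" "v0 \<le> L" and meet: "\<tau> h = \<gamma> v0"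
    and closest: "\<forall>v\<in>{0..L}. dist (\<tau> 0) (\<gamma> v0) \<le> dist (\<tau> 0) (\<gamma> v)"
  shows "quasi_geodesic 3 0 (\<lambda>s. if s \<le> h then \<tau> s else \<gamma> (v0 + (s - h))) 0 (h + (L - v0))"
    (is "quasi_geodesic 3 0 ?f 0 ?T")
proof -
  have h0: "0 \<le> h" using tau unfolding geodesic_on_def by auto
  have lip: "1-lipschitz_on {0..?T} ?f"
  proof (rule lipschitz_on_concat)
    show "1-lipschitz_on {0..h} \<tau>"
      using geodesic_on_lipschitz_reparam[OF tau, of "{0..h}" id] by simp
    show "1-lipschitz_on {h..?T} (\<lambda>s. \<gamma> (v0 + (s - h)))"
      by (rule geodesic_on_lipschitz_reparam[OF gam]) (use v0 in auto)
  qed (use meet in simp)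
  have lower: "(t - s) / 3 \<le> dist (?f s) (?f t)" if st: "0 \<le> s" "s \<le> t" "t \<le> ?T" for s t
  proof (cases "t \<le> h")
    case True
    then show ?thesis using st geodesic_onD[OF tau, of s t] by simp
  next
    case t: False
    show ?thesis
    proof (cases "s \<le> h")
      case s: True
      define w where "w = v0 + (t - h)"
      have w: "0 \<le> w" "w \<le> L" using v0 t st unfolding w_def by auto
      have "dist (\<tau> 0) (\<tau> h) \<le> dist (\<tau> 0) (\<gamma> w)" using closest w meet by auto
      also have "\<dots> \<le> dist (\<tau> 0) (\<tau> s) + dist (\<tau> s) (\<gamma> w)" by (rule dist_triangle)
      finally have near: "h - s \<le> dist (\<tau> s) (\<gamma> w)"
        using geodesic_onD[OF tau, of 0 h] geodesic_onD[OF tau, of 0 s] s st h0 by simp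
      have "dist (\<gamma> v0) (\<gamma> w) \<le> dist (\<tau> h) (\<tau> s) + dist (\<tau> s) (\<gamma> w)"
        using dist_triangle[of "\<tau> h" "\<gamma> w" "\<tau> s"] meet by simp
      then have "t - h \<le> (h - s) + dist (\<tau> s) (\<gamma> w)"
        using geodesic_onD[OF gam, of v0 w] geodesic_onD[OF tau, of h s] w v0 s st h0
        by (simp add: w_def)
      then show ?thesis using near s t by (simp add: w_def)
    next
      case False
      then show ?thesis
        using geodesic_onD[OF gam, of "v0 + (s - h)" "v0 + (t - h)"] t st v0 by simp
    qed
  qed
  show ?thesis
    by (rule quasi_geodesic_if_lipschitz[OF lip]) (use lower h0 v0 in auto)
qed

lemma N_MorseD:
  assumes "N_Morse N D \<gamma>" "K \<ge> 1" "C \<ge> 0" "quasi_geodesic K C f a b"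
    and "f a \<in> \<gamma> ` D" "f b \<in> \<gamma> ` D" "s \<in> {a..b}"
  shows "\<exists>u\<in>D. dist (f s) (\<gamma> u) \<le> N K C"
  using assms unfolding N_Morse_def by blast

lemma Morse_near_closest_point:
  fixes l \<gamma> :: "real \<Rightarrow> 'a::metric_space"
  assumes gs: "geodesic_space TYPE('a)" and Morse: "N_Morse N D l"
    and u0: "u0 \<in> D" and u: "u \<in> D"
    and gam: "geodesic_on {0..L} \<gamma>" and end_gam: "\<gamma> L = l u"
    and v0: "0 \<le> v0" "v0 \<le> L"
    and closest: "\<forall>v\<in>{0..L}. dist (l u0) (\<gamma> v0) \<le> dist (l u0) (\<gamma> v)"
  shows "\<exists>\<alpha>\<in>D. dist (\<gamma> v0) (l \<alpha>) \<le> N 3 0"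
proof -
  define h where "h = dist (l u0) (\<gamma> v0)"
  obtain \<tau> where tau: "geodesic_on {0..h} \<tau>" "\<tau> 0 = l u0" "\<tau> h = \<gamma> v0"
    using gs unfolding geodesic_space_def h_def by blast
  let ?f = "\<lambda>s. if s \<le> h then \<tau> s else \<gamma> (v0 + (s - h))"
  have h0: "0 \<le> h" by (simp add: h_def)
  have qg: "quasi_geodesic 3 0 ?f 0 (h + (L - v0))"
    by (rule closest_point_path_quasi_geodesic[OF tau(1) gam v0 tau(3)]) (use closest tau(2) in auto)
  have "?f 0 \<in> l ` D" "?f (h + (L - v0)) \<in> l ` D"
    using tau end_gam u0 u v0 h0 by auto
  from N_MorseD[OF Morse _ _ qg this, of h] show ?thesis
    using tau(3) v0 h0 by auto
qed

text \<open>A point \<open>z\<close> that is \<open>n\<close>-close to both \<open>l\<^sub>1 \<alpha>\<close> and \<open>l\<^sub>2 \<beta>\<close> forces \<open>|\<alpha> - \<beta>| \<le> 2n\<close> and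
  \<open>d(l\<^sub>1 c, l\<^sub>2 c) \<le> 4n\<close> for \<open>c = min \<alpha> \<beta>\<close>; hence \<open>c\<close> lies before the divergence time \<open>t\<^sub>0\<close>.\<close>

lemma near_point_param_sum_less:
  fixes l1 l2 :: "real \<Rightarrow> 'a::metric_space"
  assumes G1: "geodesic_on D1 l1" and G2: "geodesic_on D2 l2"
    and D0: "0 \<in> D1" "0 \<in> D2" and e: "l1 0 = l2 0"
    and \<alpha>: "\<alpha> \<in> D1" "0 \<le> \<alpha>" and \<beta>: "\<beta> \<in> D2" "0 \<le> \<beta>"
    and near: "dist z (l1 \<alpha>) \<le> n" "dist z (l2 \<beta>) \<le> n"
    and diverge: "\<forall>t \<in> D1 \<inter> D2. t \<ge> t0 \<longrightarrow> dist (l1 t) (l2 t) > 4 * n"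
  shows "\<alpha> + \<beta> < 2 * t0 + 2 * n"
proof -
  have close: "dist (l1 \<alpha>) (l2 \<beta>) \<le> 2 * n"
    using dist_triangle[of "l1 \<alpha>" "l2 \<beta>" z] near by (simp add: dist_commute)
  have "\<alpha> \<le> \<beta> + 2 * n" "\<beta> \<le> \<alpha> + 2 * n"
    using dist_triangle[of "l1 0" "l1 \<alpha>" "l2 \<beta>"] dist_triangle[of "l2 0" "l2 \<beta>" "l1 \<alpha>"]
      geodesic_onD[OF G1 D0(1) \<alpha>(1)] geodesic_onD[OF G2 D0(2) \<beta>(1)] close e \<alpha> \<beta>
    by (simp_all add: dist_commute)
  then have ab: "\<bar>\<alpha> - \<beta>\<bar> \<le> 2 * n" by simp
  define c where "c = min \<alpha> \<beta>"
  have c: "c \<in> D1" "c \<in> D2"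
    using geodesic_on_between[OF G1 D0(1) \<alpha>(1), of c] geodesic_on_between[OF G2 D0(2) \<beta>(1), of c]
      \<alpha> \<beta> by (auto simp: c_def)
  have "dist (l1 c) (l2 c) \<le> dist (l1 c) (l1 \<alpha>) + dist (l1 \<alpha>) (l2 \<beta>) + dist (l2 \<beta>) (l2 c)"
    by (metis add_right_mono dist_triangle order_trans)
  also have "\<dots> \<le> (\<alpha> - c) + 2 * n + (\<beta> - c)"
    using geodesic_onD[OF G1 c(1) \<alpha>(1)] geodesic_onD[OF G2 \<beta>(1) c(2)] close
    by (simp add: c_def)
  also have "\<dots> \<le> 4 * n" using ab by (auto simp: c_def min_def)
  finally have "c < t0" using diverge c by (meson IntI not_le)
  then show ?thesis using ab by (simp add: c_def min_def split: if_splits)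
qed

text \<open>Let \<open>z\<close> be a closest point to \<open>e = l\<^sub>1 0 = l\<^sub>2 0\<close> on a geodesic from \<open>l\<^sub>1 p\<close> to \<open>l\<^sub>2 r\<close>. By the Morse
  property \<open>z\<close> is \<open>N(3,0)\<close>-close to some \<open>l\<^sub>1 \<alpha>\<close> and to some \<open>l\<^sub>2 \<beta>\<close>, so the geodesic has length
  at least \<open>(p - \<alpha> - N(3,0)) + (r - \<beta> - N(3,0))\<close>, and \<open>\<alpha> + \<beta>\<close> is bounded by the divergence.\<close>

lemma Morse_geodesics_dist_lower_bound:
  fixes N :: "real \<Rightarrow> real \<Rightarrow> real" and l1 l2 :: "real \<Rightarrow> 'a::metric_space"
  assumes gs: "geodesic_space TYPE('a)"
    and D1: "D1 \<subseteq> {0..}" "0 \<in> D1" and D2: "D2 \<subseteq> {0..}" "0 \<in> D2"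
    and M1: "N_Morse N D1 l1" and M2: "N_Morse N D2 l2" and e: "l1 0 = l2 0"
    and diverge: "\<forall>t \<in> D1 \<inter> D2. t \<ge> t0 \<longrightarrow> dist (l1 t) (l2 t) > 4 * N 3 0"
    and p: "p \<in> D1" and r: "r \<in> D2"
  shows "p + r - 2 * t0 - 4 * N 3 0 \<le> dist (l1 p) (l2 r)"
proof -
  define n where "n = N 3 0"
  define L where "L = dist (l1 p) (l2 r)"
  have G1: "geodesic_on D1 l1" and G2: "geodesic_on D2 l2"
    using M1 M2 unfolding N_Morse_def by auto
  obtain \<gamma> where gam: "geodesic_on {0..L} \<gamma>" "\<gamma> 0 = l1 p" "\<gamma> L = l2 r"
    using gs unfolding geodesic_space_def L_def by blast
  have "continuous_on {0..L} \<gamma>"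
    using lipschitz_on_continuous_on geodesic_on_lipschitz_reparam[OF gam(1), of "{0..L}" id] by auto
  then have "\<exists>v0\<in>{0..L}. \<forall>v\<in>{0..L}. dist (l2 0) (\<gamma> v0) \<le> dist (l2 0) (\<gamma> v)"
    by (intro continuous_attains_inf) (auto simp: L_def intro!: continuous_intros)
  then obtain v0 where v0: "0 \<le> v0" "v0 \<le> L"
    and closest: "\<forall>v\<in>{0..L}. dist (l2 0) (\<gamma> v0) \<le> dist (l2 0) (\<gamma> v)" by auto
  obtain \<beta> where \<beta>: "\<beta> \<in> D2" "dist (\<gamma> v0) (l2 \<beta>) \<le> n"
    using Morse_near_closest_point[OF gs M2 D2(2) r gam(1,3) v0 closest] n_def by blast
  have "\<exists>\<alpha>\<in>D1. dist (\<gamma> (L - (L - v0))) (l1 \<alpha>) \<le> N 3 0"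
  proof (rule Morse_near_closest_point[OF gs M1 D1(2) p geodesic_on_reflect[OF gam(1)]])
    show "\<forall>v\<in>{0..L}. dist (l1 0) (\<gamma> (L - (L - v0))) \<le> dist (l1 0) (\<gamma> (L - v))"
      using closest e by auto
  qed (use gam(2) v0 in auto)
  then obtain \<alpha> where \<alpha>: "\<alpha> \<in> D1" "dist (\<gamma> v0) (l1 \<alpha>) \<le> n"
    by (auto simp: n_def)
  have "\<alpha> + \<beta> < 2 * t0 + 2 * n"
    using near_point_param_sum_less[OF G1 G2 D1(2) D2(2) e \<alpha>(1) _ \<beta>(1) _ \<alpha>(2) \<beta>(2)]
      diverge \<alpha>(1) \<beta>(1) D1(1) D2(1) n_def by auto
  moreover have "p - \<alpha> - n \<le> dist (l1 p) (\<gamma> v0)" "r - \<beta> - n \<le> dist (\<gamma> v0) (l2 r)"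
    using dist_triangle[of "l1 p" "l1 \<alpha>" "\<gamma> v0"] dist_triangle[of "l2 \<beta>" "l2 r" "\<gamma> v0"]
      geodesic_onD[OF G1 p \<alpha>(1)] geodesic_onD[OF G2 \<beta>(1) r] \<alpha>(2) \<beta>(2)
    by (simp_all add: dist_commute)
  moreover have "L = dist (\<gamma> 0) (\<gamma> v0) + dist (\<gamma> v0) (\<gamma> L)"
    using geodesic_onD[OF gam(1), of 0 v0] geodesic_onD[OF gam(1), of v0 L] v0 by simp
  ultimately show ?thesis using gam(2,3) by (simp add: L_def n_def)
qed

lemma concat_path_endpoints:
  assumes "t0 \<le> t1" "t0 \<le> t2" "0 \<le> d" "g 0 = l1 t0" "g d = l2 t0"
  shows "concat_path l1 g l2 t0 t1 t2 d 0 = l1 t1"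
    and "concat_path l1 g l2 t0 t1 t2 d ((t1 - t0) + d + (t2 - t0)) = l2 t2"
  using assms by (auto simp: concat_path_def)

lemma concat_path_lipschitz:
  fixes l1 g l2 :: "real \<Rightarrow> 'a::metric_space"
  assumes G1: "geodesic_on D1 l1" "t0 \<in> D1" "t1 \<in> D1" "t0 \<le> t1"
    and G2: "geodesic_on D2 l2" "t0 \<in> D2" "t2 \<in> D2" "t0 \<le> t2"
    and g: "geodesic_on {0..d} g" "g 0 = l1 t0" "g d = l2 t0"
  shows "1-lipschitz_on {0..(t1 - t0) + d + (t2 - t0)} (concat_path l1 g l2 t0 t1 t2 d)"
proof -
  define a where "a = t1 - t0"
  have d0: "0 \<le> d" using g(1) unfolding geodesic_on_def by auto
  have "1-lipschitz_on {0..a + d + (t2 - t0)} (\<lambda>s. if s \<le> a then l1 (t1 - s)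
      else if s \<le> a + d then g (s - a) else l2 (t0 + (s - a - d)))"
  proof (rule lipschitz_on_concat)
    show "1-lipschitz_on {0..a} (\<lambda>s. l1 (t1 - s))"
      by (rule geodesic_on_lipschitz_reparam[OF G1(1)])
        (use geodesic_on_between[OF G1(1,2,3)] in \<open>auto simp: a_def\<close>)
    show "1-lipschitz_on {a..a + d + (t2 - t0)}
        (\<lambda>s. if s \<le> a + d then g (s - a) else l2 (t0 + (s - a - d)))"
    proof (rule lipschitz_on_concat)
      show "1-lipschitz_on {a..a + d} (\<lambda>s. g (s - a))"
        by (rule geodesic_on_lipschitz_reparam[OF g(1)]) auto
      show "1-lipschitz_on {a + d..a + d + (t2 - t0)} (\<lambda>s. l2 (t0 + (s - a - d)))"
        by (rule geodesic_on_lipschitz_reparam[OF G2(1)])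
          (use geodesic_on_between[OF G2(1,2,3)] in auto)
    qed (use g(3) in simp)
  qed (use g(2) d0 in \<open>simp add: a_def\<close>)
  moreover have "concat_path l1 g l2 t0 t1 t2 d = (\<lambda>s. if s \<le> a then l1 (t1 - s)
      else if s \<le> a + d then g (s - a) else l2 (t0 + (s - a - d)))"
    by (simp add: fun_eq_iff concat_path_def a_def)
  ultimately show ?thesis by (simp add: a_def)
qed

theorem lemma3p4:
  fixes N :: "real \<Rightarrow> real \<Rightarrow> real"
    and l1 l2 g :: "real \<Rightarrow> 'a::metric_space"
    and D1 D2 :: "real set" and e :: 'a and t0 t1 t2 :: real
  assumes "geodesic_space TYPE('a)"
    and "morse_gauge N"
    and "0 \<in> D1" "D1 \<subseteq> {0..}" "0 \<in> D2" "D2 \<subseteq> {0..}"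
    and "N_Morse N D1 l1" "N_Morse N D2 l2"
    and "l1 0 = e" "l2 0 = e"
    and "t0 \<in> D1" "t0 \<in> D2"
    and "\<forall>t \<in> D1 \<inter> D2. t \<ge> t0 \<longrightarrow> dist (l1 t) (l2 t) > 4 * N 3 0"
    and "dist (l1 t0) (l2 t0) \<le> 6 * N 3 0"
    and "t1 \<in> D1" "t1 \<ge> t0" "t2 \<in> D2" "t2 \<ge> t0"
    and "geodesic_on {0..dist (l1 t0) (l2 t0)} g"
    and "g 0 = l1 t0" "g (dist (l1 t0) (l2 t0)) = l2 t0"
  shows "quasi_geodesic 1 (12 * N 3 0)
           (concat_path l1 g l2 t0 t1 t2 (dist (l1 t0) (l2 t0))) 0
           ((t1 - t0) + dist (l1 t0) (l2 t0) + (t2 - t0))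
       \<and> dist (l1 t1) (l2 t2) \<ge>
           dist (l1 t1) (l1 t0) + dist (l1 t0) (l2 t0) + dist (l2 t0) (l2 t2) - 12 * N 3 0"
proof -
  define d where "d = dist (l1 t0) (l2 t0)"
  have G1: "geodesic_on D1 l1" and G2: "geodesic_on D2 l2"
    using assms(7,8) unfolding N_Morse_def by auto
  have far: "t1 + t2 - 2 * t0 - 4 * N 3 0 \<le> dist (l1 t1) (l2 t2)"
    using Morse_geodesics_dist_lower_bound[OF assms(1,4,3,6,5,7,8) _ assms(13,15,17)] assms(9,10)
    by simp
  have legs: "dist (l1 t1) (l1 t0) = t1 - t0" "dist (l2 t0) (l2 t2) = t2 - t0"
    using geodesic_onD[OF G1 assms(15,11)] geodesic_onD[OF G2 assms(12,17)] assms(16,18) by simp_all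
  have d0: "0 \<le> d" by (simp add: d_def)
  let ?P = "concat_path l1 g l2 t0 t1 t2 d" and ?T = "(t1 - t0) + d + (t2 - t0)"
  have lip: "1-lipschitz_on {0..?T} ?P"
    using concat_path_lipschitz[OF G1 assms(11,15,16) G2 assms(12,17,18)] assms(19-21)
    by (simp add: d_def)
  have ends: "?P 0 = l1 t1" "?P ?T = l2 t2"
    using concat_path_endpoints[of t0 t1 t2 d g l1 l2] assms(16,18,20,21) by (simp_all add: d_def)
  have bound: "?T - 12 * N 3 0 \<le> dist (l1 t1) (l2 t2)"
    using far assms(14) d0 unfolding d_def by linarith
  have "quasi_geodesic 1 (12 * N 3 0) ?P 0 ?T"
    by (rule quasi_geodesic_if_lipschitz_endpoints[OF lip]) (use ends bound d0 assms(16,18) in auto)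
  then show ?thesis using legs bound by (simp add: d_def)
qed

end
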